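(* Let $n\ge 2$ and let $b_2,\dots,b_n\in\mathbb{C}$. Consider the differential operator with rational coefficients \[ L_0=\partial^n+b_2z^{-2}\partial^{n-2}+b_3z^{-3}\partial^{n-3}+\cdots+b_nz^{-n},\qquad \partial=\frac{d}{dz}, \] and let $m_0,\dots,m_{n-1}$ be the roots (counted with multiplicity) of the polynomial \[ P(m)=m(m-1)\cdots(m-n+1)+b_2\,m(m-1)\cdots(m-n+3)+\cdots+b_n , \] i.e. $P(m)=0$ exactly when $L_0z^m=0$. Then $L_0$ is algebraically integrable if and only if $m_0,\dots,m_{n-1}$ are integers which are pairwise distinct modulo $n$.
   Context: A differential operator $L$ of order $n$ is called algebraically integrable if there exists a nonzero differential operator $M$ whose order is relatively prime to $n$ such that $[L,M]=LM-ML=0$. The numbers $m_0,\dots,m_{n-1}$ are called the indices of $L_0$ at $0$. *)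

theory Defs
  imports "HOL-Computational_Algebra.Formal_Laurent_Series" "HOL-Computational_Algebra.Polynomial"
begin

text \<open>Differential operators  A = sum_k A_k d^k  (d = d/dz) with coefficients in the
  differential field of formal Laurent series in z; an operator is the list of its
  coefficients, the k-th entry being the coefficient of d^k.\<close>

type_synonym dop = "complex fls list"

definition dop_coeff :: "dop \<Rightarrow> nat \<Rightarrow> complex fls" where
  "dop_coeff A k = (if k < length A then A ! k else 0)"

text \<open>Composition via the Leibniz rule  d^i b = sum_k (i choose k) b^(k) d^(i-k);
  the result is given as its coefficient function.\<close>
definition dop_mult :: "dop \<Rightarrow> dop \<Rightarrow> nat \<Rightarrow> complex fls" where
  "dop_mult A B m =
     (\<Sum>i<length A. \<Sum>j<length B. \<Sum>k\<le>i.
        if i + j = m + k then of_nat (i choose k) * (A ! i) * ((fls_deriv ^^ k) (B ! j)) else 0)"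

definition dop_commute :: "dop \<Rightarrow> dop \<Rightarrow> bool" where
  "dop_commute A B \<longleftrightarrow> (\<forall>m. dop_mult A B m = dop_mult B A m)"

definition dop_nonzero :: "dop \<Rightarrow> bool" where
  "dop_nonzero A \<longleftrightarrow> (\<exists>k. dop_coeff A k \<noteq> 0)"

definition dop_order :: "dop \<Rightarrow> nat" where
  "dop_order A = (GREATEST k. dop_coeff A k \<noteq> 0)"

definition alg_integrable :: "dop \<Rightarrow> bool" where
  "alg_integrable L \<longleftrightarrow>
     (\<exists>M. dop_nonzero M \<and> coprime (dop_order M) (dop_order L) \<and> dop_commute L M)"

definition bcoef :: "(nat \<Rightarrow> complex) \<Rightarrow> nat \<Rightarrow> complex" where
  "bcoef b k = (if k = 0 then 1 else if k = 1 then 0 else b k)"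

definition L0 :: "nat \<Rightarrow> (nat \<Rightarrow> complex) \<Rightarrow> dop" where
  "L0 n b = map (\<lambda>i. fls_const (bcoef b (n - i)) * fls_X_inv ^ (n - i)) [0..<Suc n]"

definition indicial_poly :: "nat \<Rightarrow> (nat \<Rightarrow> complex) \<Rightarrow> complex poly" where
  "indicial_poly n b =
     (\<Sum>k\<le>n. smult (bcoef b k) (\<Prod>j<n - k. [:- of_nat j, 1:]))"

end

theory Submission
  imports Defs "HOL-Computational_Algebra.Fundamental_Theorem_Algebra"
begin

text \<open>
  L0 is homogeneous of degree -n: it maps z^s to P(s) z^(s-n), where P is the indicial polynomial.
  If M of order r commutes with L0, some homogeneous component of M has a symbol Q of degree r,
  and comparing coefficients gives P(x - r) Q(x) = P(x) Q(x - n). Hence the roots of P shifted by r,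
  together with the roots of Q, are the roots of P together with the roots of Q shifted by n. As r is
  coprime to n, this forces the roots of P to be a complete residue system modulo n inside a single
  coset of Z, and since L0 has no d^(n-1) term the roots sum to n(n-1)/2, which makes them integers.
  Conversely, if the roots m_i are integers distinct modulo n, pick R = 1 (mod n) large and join
  m_i + R to the root congruent to m_i + 1 by an arithmetic progression of step n; the product over
  these progressions is a monic Q of degree R with P(x - R) Q(x) = P(x) Q(x - n), and the homogeneous
  operator with symbol Q commutes with L0.
\<close>

notation fls_nth (infixl \<open>$$\<close> 75)

definition ffact :: "nat \<Rightarrow> 'a::comm_ring_1 \<Rightarrow> 'a" where
  "ffact k x = (\<Prod>i<k. x - of_nat i)"

lemma ffact_0 [simp]: "ffact 0 x = 1"
  by (simp add: ffact_def)

lemma ffact_Suc: "ffact (Suc k) x = ffact k x * (x - of_nat k)"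
  by (simp add: ffact_def)

lemma ffact_of_nat_eq_0: "m < k \<Longrightarrow> ffact k (of_nat m) = 0"
  unfolding ffact_def by (rule prod_zero) auto

lemma ffact_of_nat_self_neq_0: "ffact m (of_nat m :: 'a::{idom,ring_char_0}) \<noteq> 0"
  by (auto simp: ffact_def)

definition ffact_poly :: "nat \<Rightarrow> 'a::comm_ring_1 poly" where
  "ffact_poly k = (\<Prod>i<k. [:- of_nat i, 1:])"

lemma poly_ffact_poly [simp]: "poly (ffact_poly k) x = ffact k x"
  by (simp add: ffact_poly_def ffact_def poly_prod)

lemma degree_prod_linear: "degree (\<Prod>i<k. [:- a i, 1:] :: 'a::idom poly) = k"
  by (subst degree_prod_sum_eq) auto

lemma coeff_prod_linear_top: "coeff (\<Prod>i<k. [:- a i, 1:] :: 'a::idom poly) k = 1"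
  using lead_coeff_prod[of "\<lambda>i. [:- a i, 1:]" "{..<k}"] degree_prod_linear[of a k] by simp

lemma coeff_prod_linear_subleading:
  "coeff (\<Prod>i<Suc k. [:- a i, 1:] :: 'a::idom poly) k = - (\<Sum>i<Suc k. a i)"
proof (induction k)
  case (Suc k)
  let ?p = "\<Prod>i<Suc k. [:- a i, 1:] :: 'a poly"
  have "(\<Prod>i<Suc (Suc k). [:- a i, 1:]) = smult (- a (Suc k)) ?p + pCons 0 ?p"
    by (simp add: mult_pCons_right)
  then show ?case
    using Suc coeff_prod_linear_top[of a "Suc k"] by simp
qed simp

lemma degree_ffact_poly [simp]: "degree (ffact_poly k :: 'a::{idom,ring_char_0} poly) = k"
  unfolding ffact_poly_def by (rule degree_prod_linear)

lemma coeff_ffact_poly_top [simp]: "coeff (ffact_poly k :: 'a::{idom,ring_char_0} poly) k = 1"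
  unfolding ffact_poly_def by (rule coeff_prod_linear_top)

lemma fls_deriv_funpow_nth:
  "((fls_deriv ^^ k) f) $$ u = ffact k (of_int u + of_nat k) * f $$ (u + int k)"
proof (induction k arbitrary: u)
  case (Suc k)
  have "((fls_deriv ^^ Suc k) f) $$ u = of_int (u + 1) * ((fls_deriv ^^ k) f) $$ (u + 1)"
    by simp
  also have "\<dots> = of_int (u + 1) * ffact k (of_int (u + 1) + of_nat k) * f $$ (u + int (Suc k))"
    using Suc by (simp add: algebra_simps)
  also have "of_int (u + 1) * ffact k (of_int (u + 1) + of_nat k) = ffact (Suc k) (of_int u + of_nat (Suc k))"
    by (simp add: ffact_Suc algebra_simps)
  finally show ?case .
qed simp

lemma fls_deriv_funpow_X_intpow:
  "(fls_deriv ^^ m) (fls_X_intpow s) = fls_const (ffact m (of_int s)) * fls_X_intpow (s - int m)"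
proof (rule fls_eqI)
  fix t
  show "(fls_deriv ^^ m) (fls_X_intpow s) $$ t
      = (fls_const (ffact m (of_int s)) * fls_X_intpow (s - int m)) $$ t"
  proof (cases "t = s - int m")
    case True
    then have "of_int t + of_nat m = (of_int s :: 'a)"
      by simp
    with True show ?thesis
      by (simp add: fls_deriv_funpow_nth)
  qed (auto simp: fls_deriv_funpow_nth)
qed

lemma fls_deriv_funpow_sum: "(fls_deriv ^^ i) (sum g S) = (\<Sum>x\<in>S. (fls_deriv ^^ i) (g x))"
  by (induction i) (simp_all add: fls_deriv_sum)

lemma fls_deriv_funpow_const_mult:
  "(fls_deriv ^^ m) (fls_const c * g) = fls_const c * (fls_deriv ^^ m) g"
  by (induction m) simp_all

lemma fls_deriv_funpow_mult:
  fixes f g :: "'a::comm_ring_1 fls"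
  shows "(fls_deriv ^^ i) (f * g) =
     (\<Sum>k\<le>i. of_nat (i choose k) * (fls_deriv ^^ k) f * (fls_deriv ^^ (i - k)) g)"
proof (induction i)
  case (Suc i)
  let ?D = "\<lambda>k h. (fls_deriv ^^ k) h"
  let ?t = "\<lambda>c k. of_nat c * ?D k f * ?D (Suc i - k) g"
  have "?D (Suc i) (f * g)
      = (\<Sum>k\<le>i. of_nat (i choose k) * ?D (Suc k) f * ?D (i - k) g) + (\<Sum>k\<le>i. ?t (i choose k) k)"
    unfolding funpow.simps comp_def Suc fls_deriv_sum
    by (simp add: sum.distrib algebra_simps Suc_diff_le)
  also have "(\<Sum>k\<le>i. of_nat (i choose k) * ?D (Suc k) f * ?D (i - k) g)
      = (\<Sum>k\<le>Suc i. ?t (if k = 0 then 0 else i choose (k - 1)) k)"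
    by (subst sum.atMost_Suc_shift) simp
  also have "(\<Sum>k\<le>i. ?t (i choose k) k) = (\<Sum>k\<le>Suc i. ?t (i choose k) k)"
    by (simp add: binomial_eq_0)
  also have "(\<Sum>k\<le>Suc i. ?t (if k = 0 then 0 else i choose (k - 1)) k) + \<dots>
      = (\<Sum>k\<le>Suc i. ?t (Suc i choose k) k)"
    unfolding sum.distrib[symmetric]
  proof (intro sum.cong refl)
    fix k
    show "?t (if k = 0 then 0 else i choose (k - 1)) k + ?t (i choose k) k = ?t (Suc i choose k) k"
      by (cases k) (simp_all add: algebra_simps)
  qed
  finally show ?case .
qed simp

section \<open>Differential operators acting on Laurent series\<close>

text \<open>Operators act through coefficient functions, the form in which dop_mult returns a product.\<close>
definition dop_apply_coeffs :: "(nat \<Rightarrow> complex fls) \<Rightarrow> nat \<Rightarrow> complex fls \<Rightarrow> complex fls" where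
  "dop_apply_coeffs C N f = (\<Sum>k<N. C k * (fls_deriv ^^ k) f)"

abbreviation dop_apply :: "dop \<Rightarrow> complex fls \<Rightarrow> complex fls" where
  "dop_apply A \<equiv> dop_apply_coeffs (dop_coeff A) (length A)"

lemma dop_mult_eq_0: "length A + length B \<le> m \<Longrightarrow> dop_mult A B m = 0"
  unfolding dop_mult_def by (intro sum.neutral ballI) auto

lemma dop_apply_mult:
  "dop_apply_coeffs (dop_mult A B) (length A + length B) f = dop_apply A (dop_apply B f)"
proof -
  let ?D = "\<lambda>k h. (fls_deriv ^^ k) h"
  let ?N = "length A + length B"
  let ?t = "\<lambda>i j k. of_nat (i choose k) * (A ! i) * ?D k (B ! j)"
  have DD: "?D i (?D j h) = ?D (i + j) h" for i j h
    by (simp add: funpow_add)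
  have "dop_apply A (dop_apply B f)
      = (\<Sum>i<length A. \<Sum>j<length B. \<Sum>k\<le>i. ?t i j k * ?D (i + j - k) f)"
    unfolding dop_apply_coeffs_def dop_coeff_def
    by (simp add: fls_deriv_funpow_sum fls_deriv_funpow_mult sum_distrib_left
        DD algebra_simps Nat.add_diff_assoc2)
  also have "\<dots> = (\<Sum>i<length A. \<Sum>j<length B. \<Sum>k\<le>i. \<Sum>m<?N.
      if i + j = m + k then ?t i j k * ?D m f else 0)"
  proof (intro sum.cong refl)
    fix i j k assume "i \<in> {..<length A}" "j \<in> {..<length B}" "k \<in> {..i}"
    then have "(\<Sum>m<?N. if i + j = m + k then ?t i j k * ?D m f else 0)
        = (\<Sum>m<?N. if m = i + j - k then ?t i j k * ?D m f else 0)"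
      by (intro sum.cong refl) auto
    also have "\<dots> = ?t i j k * ?D (i + j - k) f"
      using \<open>i \<in> {..<length A}\<close> \<open>j \<in> {..<length B}\<close> \<open>k \<in> {..i}\<close> by (subst sum.delta) auto
    finally show "?t i j k * ?D (i + j - k) f
        = (\<Sum>m<?N. if i + j = m + k then ?t i j k * ?D m f else 0)" ..
  qed
  also have "\<dots> = (\<Sum>m<?N. \<Sum>i<length A. \<Sum>j<length B. \<Sum>k\<le>i.
      if i + j = m + k then ?t i j k * ?D m f else 0)"
    by (simp only: sum.swap[where A = "{..<?N}"])
  also have "\<dots> = dop_apply_coeffs (dop_mult A B) ?N f"
    unfolding dop_apply_coeffs_def dop_mult_def sum_distrib_right
    by (intro sum.cong refl) simp
  finally show ?thesis ..
qed

lemma dop_commute_imp_apply_commute: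
  "dop_commute A B \<Longrightarrow> dop_apply A (dop_apply B f) = dop_apply B (dop_apply A f)"
  using dop_apply_mult[of A B f] dop_apply_mult[of B A f]
  by (metis add.commute dop_commute_def ext)

lemma dop_apply_coeffs_X_intpow_nth:
  "dop_apply_coeffs C N (fls_X_intpow s) $$ t = (\<Sum>m<N. C m $$ (t - s + int m) * ffact m (of_int s))"
proof -
  have "(C m * (fls_const (ffact m (of_int s)) * fls_X_intpow (s - int m))) $$ t
      = C m $$ (t - s + int m) * ffact m (of_int s)" for m
    by (subst mult.assoc[symmetric], subst fls_X_intpow_times_conv_shift(2)) (simp add: algebra_simps)
  then show ?thesis
    by (simp add: dop_apply_coeffs_def fls_deriv_funpow_X_intpow fls_nth_sum)
qed

lemma dop_apply_coeffs_const_mult: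
  "dop_apply_coeffs C N (fls_const c * g) = fls_const c * dop_apply_coeffs C N g"
  unfolding dop_apply_coeffs_def fls_deriv_funpow_const_mult sum_distrib_left
  by (simp add: mult_ac)

lemma dop_apply_coeffs_diff:
  "dop_apply_coeffs (\<lambda>m. C m - D m) N f = dop_apply_coeffs C N f - dop_apply_coeffs D N f"
  unfolding dop_apply_coeffs_def by (simp add: sum_subtractf algebra_simps)

text \<open>The matrix (ffact m k) indexed by m and k is triangular with nonzero diagonal.\<close>
lemma ffact_combination_eq_0_imp_eq_0:
  fixes c :: "nat \<Rightarrow> 'a::{idom,ring_char_0}"
  assumes "\<And>k. (\<Sum>m<N. c m * ffact m (of_nat k)) = 0" and "m < N"
  shows "c m = 0"
  using \<open>m < N\<close>
proof (induction m rule: less_induct)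
  case (less m)
  have "(\<Sum>i\<in>{..<N} - {m}. c i * ffact i (of_nat m)) = 0"
  proof (intro sum.neutral ballI)
    fix i assume "i \<in> {..<N} - {m}"
    then consider "i < m" | "m < i" by fastforce
    then show "c i * ffact i (of_nat m) = 0"
      by cases (use less ffact_of_nat_eq_0 in auto)
  qed
  then have "(\<Sum>i<N. c i * ffact i (of_nat m)) = c m * ffact m (of_nat m)"
    using less by (simp add: sum.remove)
  then show ?case
    using assms(1)[of m] ffact_of_nat_self_neq_0[of m, where 'a = 'a] by simp
qed

lemma dop_coeffs_eq_0_if_apply_X_intpow_eq_0:
  assumes "\<And>s. dop_apply_coeffs C N (fls_X_intpow s) = 0" and "m < N"
  shows "C m = 0"
proof (rule fls_eqI)
  fix u
  have "(\<Sum>j<N. C j $$ (u - int m + int j) * ffact j (of_nat k)) = 0" for k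
    using arg_cong[OF assms(1)[of "int k"], of "\<lambda>f. f $$ (u - int m + int k)"]
    by (simp add: dop_apply_coeffs_X_intpow_nth)
  from ffact_combination_eq_0_imp_eq_0[OF this \<open>m < N\<close>] show "C m $$ u = 0 $$ u"
    by simp
qed

lemma dop_commuteI_X_intpow:
  assumes "\<And>s. dop_apply A (dop_apply B (fls_X_intpow s)) = dop_apply B (dop_apply A (fls_X_intpow s))"
  shows "dop_commute A B"
  unfolding dop_commute_def
proof
  fix m
  let ?N = "length A + length B"
  show "dop_mult A B m = dop_mult B A m"
  proof (cases "m < ?N")
    case True
    have "dop_apply_coeffs (\<lambda>m. dop_mult A B m - dop_mult B A m) ?N (fls_X_intpow s) = 0" for s
      using dop_apply_mult[of A B] dop_apply_mult[of B A] assms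
      by (simp add: dop_apply_coeffs_diff add.commute)
    from dop_coeffs_eq_0_if_apply_X_intpow_eq_0[OF this True] show ?thesis
      by simp
  qed (simp add: dop_mult_eq_0)
qed

lemma dop_coeff_neq_0_imp_less_length: "dop_coeff A k \<noteq> 0 \<Longrightarrow> k < length A"
  by (auto simp: dop_coeff_def split: if_splits)

lemma
  assumes "dop_nonzero A"
  shows dop_coeff_order_neq_0: "dop_coeff A (dop_order A) \<noteq> 0"
    and dop_coeff_above_order: "dop_order A < k \<Longrightarrow> dop_coeff A k = 0"
proof -
  obtain j where j: "dop_coeff A j \<noteq> 0"
    using assms unfolding dop_nonzero_def by auto
  have bound: "dop_coeff A k \<noteq> 0 \<Longrightarrow> k \<le> length A" for k
    using dop_coeff_neq_0_imp_less_length by fastforce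
  show "dop_coeff A (dop_order A) \<noteq> 0"
    unfolding dop_order_def by (rule GreatestI_nat[where P = "\<lambda>k. dop_coeff A k \<noteq> 0", OF j bound])
  show "dop_order A < k \<Longrightarrow> dop_coeff A k = 0"
    unfolding dop_order_def using Greatest_le_nat[where P = "\<lambda>k. dop_coeff A k \<noteq> 0", OF _ bound] by force
qed

lemma dop_order_eqI:
  assumes "length A = Suc d" and "dop_coeff A d \<noteq> 0"
  shows "dop_order A = d"
  unfolding dop_order_def
proof (rule Greatest_equality)
  show "k \<le> d" if "dop_coeff A k \<noteq> 0" for k
    using dop_coeff_neq_0_imp_less_length[OF that] assms(1) by simp
qed fact

section \<open>The operator L0 and its indicial polynomial\<close>

lemma length_L0 [simp]: "length (L0 n b) = Suc n"
  by (simp add: L0_def)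

lemma dop_coeff_L0: "i \<le> n \<Longrightarrow> dop_coeff (L0 n b) i = fls_const (bcoef b (n - i)) * fls_X_inv ^ (n - i)"
  by (simp add: L0_def dop_coeff_def del: upt_Suc)

lemma dop_order_L0: "dop_order (L0 n b) = n"
  by (rule dop_order_eqI) (simp_all add: dop_coeff_L0 bcoef_def)

lemma indicial_poly_eq: "indicial_poly n b = (\<Sum>k\<le>n. smult (bcoef b k) (ffact_poly (n - k)))"
  by (simp add: indicial_poly_def ffact_poly_def)

lemma poly_indicial_poly: "poly (indicial_poly n b) x = (\<Sum>i\<le>n. bcoef b (n - i) * ffact i x)"
proof -
  have "poly (indicial_poly n b) x = (\<Sum>k\<le>n. bcoef b k * ffact (n - k) x)"
    by (simp add: indicial_poly_eq poly_sum)
  also have "\<dots> = (\<Sum>i\<le>n. bcoef b (n - i) * ffact i x)"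
    by (rule sum.reindex_bij_witness[where i = "\<lambda>i. n - i" and j = "\<lambda>i. n - i"]) auto
  finally show ?thesis .
qed

lemma dop_apply_L0_nth:
  "dop_apply (L0 n b) f $$ t = poly (indicial_poly n b) (of_int t + of_nat n) * f $$ (t + int n)"
proof -
  have "(dop_coeff (L0 n b) i * (fls_deriv ^^ i) f) $$ t
      = bcoef b (n - i) * (ffact i (of_int t + of_nat n) * f $$ (t + int n))" if "i < Suc n" for i
  proof -
    have "t + int (n - i) + int i = t + int n" and "of_int (t + int (n - i)) + of_nat i = of_int t + (of_nat n :: complex)"
      using that by simp_all
    then show ?thesis
      using that by (simp add: dop_coeff_L0 mult.assoc fls_X_inv_power_times_conv_shift(1)
          fls_deriv_funpow_nth)
  qed
  then show ?thesis
    unfolding dop_apply_coeffs_def fls_nth_sum length_L0 poly_indicial_poly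
      lessThan_Suc_atMost sum_distrib_right
    by (intro sum.cong refl) (simp add: mult_ac)
qed

lemma dop_apply_L0_X_intpow:
  "dop_apply (L0 n b) (fls_X_intpow s)
     = fls_const (poly (indicial_poly n b) (of_int s)) * fls_X_intpow (s - int n)"
proof (rule fls_eqI)
  fix t
  show "dop_apply (L0 n b) (fls_X_intpow s) $$ t
      = (fls_const (poly (indicial_poly n b) (of_int s)) * fls_X_intpow (s - int n)) $$ t"
  proof (cases "t = s - int n")
    case True
    then have "of_int t + of_nat n = (of_int s :: complex)"
      by simp
    with True show ?thesis
      by (simp add: dop_apply_L0_nth[unfolded length_L0])
  qed (auto simp: dop_apply_L0_nth[unfolded length_L0])
qed

lemma coeff_indicial_poly: "coeff (indicial_poly n b) j = (\<Sum>k\<le>n. bcoef b k * coeff (ffact_poly (n - k)) j)"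
  by (simp add: indicial_poly_eq coeff_sum)

lemma coeff_indicial_poly_eq_leading_term:
  assumes "\<And>k. 0 < k \<Longrightarrow> k \<le> n \<Longrightarrow> bcoef b k * coeff (ffact_poly (n - k)) j = 0"
  shows "coeff (indicial_poly n b) j = coeff (ffact_poly n) j"
proof -
  have "(\<Sum>k\<in>{..n} - {0}. bcoef b k * coeff (ffact_poly (n - k)) j) = 0"
    using assms by (intro sum.neutral) auto
  then have "coeff (indicial_poly n b) j = bcoef b 0 * coeff (ffact_poly (n - 0)) j"
    unfolding coeff_indicial_poly by (subst sum.remove[of _ 0]) auto
  then show ?thesis
    by (simp add: bcoef_def)
qed

lemma degree_indicial_poly: "degree (indicial_poly n b) = n"
  and lead_coeff_indicial_poly: "lead_coeff (indicial_poly n b) = 1"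
proof -
  have le: "degree (indicial_poly n b) \<le> n"
    unfolding indicial_poly_eq
    by (rule degree_sum_le) (auto intro: order.trans[OF degree_smult_le])
  have "coeff (indicial_poly n b) n = 1"
    by (subst coeff_indicial_poly_eq_leading_term) (auto intro!: coeff_eq_0)
  with le show "degree (indicial_poly n b) = n" "lead_coeff (indicial_poly n b) = 1"
    by (metis le_antisym le_degree zero_neq_one)+
qed

text \<open>This is where the vanishing of the coefficient of d^(n-1) in L0 enters: the roots of the
  indicial polynomial sum to 0 + 1 + ... + (n - 1).\<close>
lemma coeff_indicial_poly_subleading:
  assumes "n \<ge> 1"
  shows "coeff (indicial_poly n b) (n - 1) = - (\<Sum>i<n. of_nat i)"
proof -
  have "coeff (indicial_poly n b) (n - 1) = coeff (ffact_poly n) (n - 1)"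
  proof (rule coeff_indicial_poly_eq_leading_term)
    fix k assume "0 < k" "k \<le> n"
    then show "bcoef b k * coeff (ffact_poly (n - k)) (n - 1) = 0"
      by (cases "k = 1") (auto simp: bcoef_def intro!: coeff_eq_0)
  qed
  also have "\<dots> = - (\<Sum>i<n. of_nat i)"
    using coeff_prod_linear_subleading[of "of_nat" "n - 1"] assms by (simp add: ffact_poly_def)
  finally show ?thesis .
qed

section \<open>Necessity of the condition\<close>

lemma poly_eqI_of_int:
  fixes p q :: "'a::{idom,ring_char_0} poly"
  assumes "\<And>s. poly p (of_int s) = poly q (of_int s)"
  shows "p = q"
proof (rule ccontr)
  assume "p \<noteq> q"
  then have "finite {x. poly (p - q) x = 0}"
    by (intro poly_roots_finite) simp
  moreover have "range (of_int :: int \<Rightarrow> 'a) \<subseteq> {x. poly (p - q) x = 0}"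
    using assms by auto
  moreover have "infinite (range (of_int :: int \<Rightarrow> 'a))"
    by (auto dest!: finite_imageD simp: inj_on_def)
  ultimately show False
    using finite_subset by blast
qed

text \<open>The operator M maps z^s to the sum over e of (poly (dop_symbol M e) s) z^(s+e).\<close>
definition dop_symbol :: "dop \<Rightarrow> int \<Rightarrow> complex poly" where
  "dop_symbol M e = (\<Sum>j<length M. smult (dop_coeff M j $$ (e + int j)) (ffact_poly j))"

lemma dop_apply_X_intpow_nth:
  "dop_apply M (fls_X_intpow s) $$ (s + e) = poly (dop_symbol M e) (of_int s)"
  by (simp add: dop_apply_coeffs_X_intpow_nth dop_symbol_def poly_sum algebra_simps)

lemma degree_dop_symbol_order:
  assumes "dop_nonzero M" and "dop_coeff M (dop_order M) $$ u \<noteq> 0"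
  defines "Q \<equiv> dop_symbol M (u - int (dop_order M))"
  shows "degree Q = dop_order M" and "Q \<noteq> 0"
proof -
  let ?r = "dop_order M"
  have above: "?r < j \<Longrightarrow> dop_coeff M j = 0" for j
    using dop_coeff_above_order[OF assms(1)] .
  have "degree Q \<le> ?r"
    unfolding Q_def dop_symbol_def
  proof (rule degree_sum_le)
    fix j
    show "degree (smult (dop_coeff M j $$ (u - int ?r + int j)) (ffact_poly j)) \<le> ?r"
    proof (cases "?r < j")
      case False
      then show ?thesis
        using degree_smult_le[of _ "ffact_poly j"] by (simp add: order_trans)
    qed (simp add: above)
  qed simp
  moreover have "coeff Q ?r = dop_coeff M ?r $$ u"
  proof -
    have "?r < length M"
      using dop_coeff_neq_0_imp_less_length dop_coeff_order_neq_0[OF assms(1)] .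
    moreover have "(\<Sum>j\<in>{..<length M} - {?r}. dop_coeff M j $$ (u - int ?r + int j) * coeff (ffact_poly j) ?r) = 0"
    proof (intro sum.neutral ballI)
      fix j assume "j \<in> {..<length M} - {?r}"
      then consider "j < ?r" | "?r < j" by fastforce
      then show "dop_coeff M j $$ (u - int ?r + int j) * coeff (ffact_poly j) ?r = 0"
        by cases (auto simp: above coeff_eq_0)
    qed
    ultimately show ?thesis
      unfolding Q_def dop_symbol_def coeff_sum coeff_smult
      by (subst sum.remove[of _ ?r]) auto
  qed
  with assms(2) have "coeff Q ?r \<noteq> 0"
    by simp
  ultimately show "degree Q = ?r" "Q \<noteq> 0"
    by (auto intro: le_antisym le_degree)
qed

text \<open>Apply both sides of L0 M = M L0 to z^s and compare the coefficients of z^(s+e-n).\<close>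
lemma commuting_with_L0_imp_symbol_identity:
  assumes "dop_commute (L0 n b) M"
  shows "pcompose (indicial_poly n b) [:of_int e, 1:] * dop_symbol M e
       = indicial_poly n b * pcompose (dop_symbol M e) [:- of_nat n, 1:]"
proof (rule poly_eqI_of_int)
  fix s :: int
  let ?P = "poly (indicial_poly n b)" and ?Q = "poly (dop_symbol M e)"
  let ?t = "s - int n + e"
  have "?t + int n = s + e"
    by simp
  then have L0_M: "dop_apply (L0 n b) (dop_apply M (fls_X_intpow s)) $$ ?t
      = ?P (of_int s + of_int e) * ?Q (of_int s)"
    by (simp only: dop_apply_L0_nth dop_apply_X_intpow_nth) simp
  have "dop_apply M (dop_apply (L0 n b) (fls_X_intpow s))
      = fls_const (?P (of_int s)) * dop_apply M (fls_X_intpow (s - int n))"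
    by (simp only: dop_apply_L0_X_intpow dop_apply_coeffs_const_mult)
  then have M_L0: "dop_apply M (dop_apply (L0 n b) (fls_X_intpow s)) $$ ?t
      = ?P (of_int s) * ?Q (of_int s - of_nat n)"
    by (simp only: fls_mult_const_nth dop_apply_X_intpow_nth) simp
  have "?P (of_int s + of_int e) * ?Q (of_int s) = ?P (of_int s) * ?Q (of_int s - of_nat n)"
    using L0_M M_L0 dop_commute_imp_apply_commute[OF assms] by metis
  then show "poly (pcompose (indicial_poly n b) [:of_int e, 1:] * dop_symbol M e) (of_int s)
      = poly (indicial_poly n b * pcompose (dop_symbol M e) [:- of_nat n, 1:]) (of_int s)"
    by (simp add: poly_pcompose add.commute)
qed

lemma int_fun_periodic_multiple:
  fixes f :: "int \<Rightarrow> 'b"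
  assumes "\<And>c. f (c + d) = f c"
  shows "f (c + k * d) = f c"
proof (induction k arbitrary: c rule: int_induct[where k = 0])
  case (step1 i)
  then show ?case
    using assms[of "c + i * d"] by (simp add: algebra_simps)
next
  case (step2 i)
  then show ?case
    using assms[of "c + (i - 1) * d"] by (simp add: algebra_simps)
qed simp

lemma int_fun_const_if_coprime_periods:
  fixes f :: "int \<Rightarrow> 'b"
  assumes "\<And>c. f (c + a) = f c" and "\<And>c. f (c + b) = f c" and "coprime a b"
  shows "f c = f 0"
proof -
  obtain u v where uv: "u * a + v * b = 1"
    using bezout_int[of a b] \<open>coprime a b\<close> by (auto simp: coprime_iff_gcd_eq_1)
  have "f (c + 1) = f c" for c
    using int_fun_periodic_multiple[of f b "c + u * a" v, OF assms(2)]
      int_fun_periodic_multiple[of f a c u, OF assms(1)]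
    by (simp add: uv[symmetric] add.assoc)
  from int_fun_periodic_multiple[of f 1 0 c, OF this] show ?thesis
    by simp
qed

lemma filter_mset_bex_disjoint:
  assumes "finite C" and "\<And>c c' x. c \<in> C \<Longrightarrow> c' \<in> C \<Longrightarrow> c \<noteq> c' \<Longrightarrow> P c x \<Longrightarrow> \<not> P c' x"
  shows "filter_mset (\<lambda>x. \<exists>c\<in>C. P c x) R = (\<Sum>c\<in>C. filter_mset (P c) R)"
  using assms
proof (induction C rule: finite_induct)
  case (insert c C)
  have "\<not> (\<exists>c'\<in>C. P c' x)" if "P c x" for x
    using insert.prems insert.hyps that by blast
  then have "filter_mset (\<lambda>x. \<exists>c'\<in>insert c C. P c' x) R
      = filter_mset (P c) R + filter_mset (\<lambda>x. \<exists>c'\<in>C. P c' x) R"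
    by (induction R) auto
  moreover have "filter_mset (\<lambda>x. \<exists>c'\<in>C. P c' x) R = (\<Sum>c\<in>C. filter_mset (P c) R)"
    using insert.IH insert.prems by blast
  ultimately show ?case
    using insert.hyps by simp
qed simp

definition residue_class :: "'a::ring_1 \<Rightarrow> int \<Rightarrow> int \<Rightarrow> 'a set" where
  "residue_class a n c = {a + of_int k |k. k mod n = c mod n}"

lemma add_of_int_in_residue_class:
  "x + of_int d \<in> residue_class a n c \<longleftrightarrow> x \<in> residue_class a n (c - d)"
proof
  assume "x + of_int d \<in> residue_class a n c"
  then obtain k where k: "x + of_int d = a + of_int k" "k mod n = c mod n"
    by (auto simp: residue_class_def)
  have "x = a + of_int (k - d)"
    using k(1) by (simp add: algebra_simps)
  moreover have "(k - d) mod n = (c - d) mod n"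
    using k(2) by (metis mod_diff_left_eq)
  ultimately show "x \<in> residue_class a n (c - d)"
    unfolding residue_class_def by blast
next
  assume "x \<in> residue_class a n (c - d)"
  then obtain k where k: "x = a + of_int k" "k mod n = (c - d) mod n"
    by (auto simp: residue_class_def)
  have "x + of_int d = a + of_int (k + d)"
    using k(1) by simp
  moreover have "(k + d) mod n = c mod n"
    using k(2) by (metis diff_add_cancel mod_add_left_eq)
  ultimately show "x + of_int d \<in> residue_class a n c"
    unfolding residue_class_def by blast
qed

lemma residue_class_mod [simp]: "residue_class a n (c mod n) = residue_class a n c"
  by (simp add: residue_class_def)

lemma residue_classes_meet_imp_mod_eq:
  fixes a :: "'a::ring_char_0"
  assumes "x \<in> residue_class a n c" and "x \<in> residue_class a n c'"
  shows "c mod n = c' mod n"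
  using assms by (auto simp: residue_class_def)

text \<open>Shifting by r moves the class of c to that of c + r, while shifting by n fixes every class.\<close>
lemma residue_class_count_const:
  fixes R T :: "'a::ring_char_0 multiset"
  assumes shift: "image_mset (\<lambda>x. x + of_nat r) R + T = R + image_mset (\<lambda>x. x + of_nat n) T"
    and "coprime r n"
  shows "size (filter_mset (\<lambda>x. x \<in> residue_class a (int n) c) R)
       = size (filter_mset (\<lambda>x. x \<in> residue_class a (int n) 0) R)"
proof -
  let ?in = "\<lambda>c x. x \<in> residue_class a (int n) c"
  define A where "A c = size (filter_mset (?in c) R)" for c
  show ?thesis
    unfolding A_def[symmetric]
  proof (rule int_fun_const_if_coprime_periods)
    fix c
    have "?in (c + int r) (x + of_nat r) \<longleftrightarrow> ?in c x" for x
      using add_of_int_in_residue_class[of x "int r" a "int n" "c + int r"] by simp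
    moreover have "?in (c + int r) (x + of_nat n) \<longleftrightarrow> ?in (c + int r) x" for x
      using add_of_int_in_residue_class[of x "int n" a "int n" "c + int r"]
        residue_class_mod[of a "int n" "c + int r - int n"] by (simp add: mod_diff_right_eq)
    ultimately show "A (c + int r) = A c"
      using arg_cong[OF shift, of "\<lambda>M. size (filter_mset (?in (c + int r)) M)"]
      by (simp add: A_def filter_mset_image_mset)
    show "A (c + int n) = A c"
      by (simp add: A_def residue_class_mod[of a "int n" "c + int n", symmetric])
    show "coprime (int r) (int n)"
      using \<open>coprime r n\<close> by simp
  qed
qed

lemma filter_mset_residue_classes:
  fixes R :: "'a::ring_char_0 multiset"
  shows "filter_mset (\<lambda>x. \<exists>c\<in>{..<n}. x \<in> residue_class a (int n) (int c)) R
       = (\<Sum>c<n. filter_mset (\<lambda>x. x \<in> residue_class a (int n) (int c)) R)"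
proof (rule filter_mset_bex_disjoint[where P = "\<lambda>c x. x \<in> residue_class a (int n) (int c)"])
  fix c c' x
  assume "c \<in> {..<n}" "c' \<in> {..<n}" "c \<noteq> c'" "x \<in> residue_class a (int n) (int c)"
  show "x \<notin> residue_class a (int n) (int c')"
  proof
    assume "x \<in> residue_class a (int n) (int c')"
    with \<open>x \<in> residue_class a (int n) (int c)\<close> have "int c mod int n = int c' mod int n"
      by (rule residue_classes_meet_imp_mod_eq)
    with \<open>c \<in> {..<n}\<close> \<open>c' \<in> {..<n}\<close> \<open>c \<noteq> c'\<close> show False
      by simp
  qed
qed simp

lemma residue_class_representatives:
  fixes R :: "'a::ring_char_0 multiset"
  assumes R: "R = (\<Sum>c<n. filter_mset (\<lambda>x. x \<in> residue_class a (int n) (int c)) R)"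
    and one: "\<And>c. c < n \<Longrightarrow> size (filter_mset (\<lambda>x. x \<in> residue_class a (int n) (int c)) R) = 1"
  shows "\<exists>k. (\<forall>c<n. k c mod int n = int c) \<and> R = image_mset (\<lambda>c. a + of_int (k c)) (mset_set {..<n})"
proof -
  let ?in = "\<lambda>c x. x \<in> residue_class a (int n) c"
  have "\<forall>c. \<exists>k. c < n \<longrightarrow> filter_mset (?in (int c)) R = {#a + of_int k#} \<and> k mod int n = int c"
  proof
    fix c
    show "\<exists>k. c < n \<longrightarrow> filter_mset (?in (int c)) R = {#a + of_int k#} \<and> k mod int n = int c"
    proof (cases "c < n")
      case True
      then obtain x where x: "filter_mset (?in (int c)) R = {#x#}"
        using one size_1_singleton_mset by blast
      then have "x \<in># filter_mset (?in (int c)) R"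
        by simp
      then have "?in (int c) x"
        by (simp only: mset_filter set_mset_filter mem_Collect_eq)
      then obtain k where "x = a + of_int k" "k mod int n = int c mod int n"
        unfolding residue_class_def by blast
      with x True show ?thesis
        by auto
    qed simp
  qed
  from choice[OF this] obtain k
    where k: "c < n \<Longrightarrow> filter_mset (?in (int c)) R = {#a + of_int (k c)#} \<and> k c mod int n = int c" for c
    by blast
  have "R = image_mset (\<lambda>c. a + of_int (k c)) (mset_set {..<n})"
    using k by (subst R) (simp add: sum_unfold_sum_mset)
  with k show ?thesis
    by blast
qed

text \<open>The class sizes in a + Z are constant in the residue; the class of a is nonempty, and
  since |R| = n each class holds exactly one element.\<close>
lemma complete_residue_system_if_shift_identity:
  fixes R T :: "'a::ring_char_0 multiset"
  assumes "n > 0" and "size R = n" and "coprime r n"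
    and shift: "image_mset (\<lambda>x. x + of_nat r) R + T = R + image_mset (\<lambda>x. x + of_nat n) T"
  shows "\<exists>a k. (\<forall>c<n. k c mod int n = int c) \<and>
           R = image_mset (\<lambda>c. a + of_int (k c)) (mset_set {..<n})"
proof -
  obtain a where "a \<in># R"
    using assms(1,2) by (metis multiset_nonemptyE not_less0 size_empty)
  let ?in = "\<lambda>c x. x \<in> residue_class a (int n) c"
  define A where "A = size (filter_mset (?in 0) R)"
  have A_const: "size (filter_mset (?in c) R) = A" for c
    unfolding A_def using residue_class_count_const[OF shift \<open>coprime r n\<close>] .
  have "a \<in> residue_class a (int n) 0"
    by (force simp: residue_class_def)
  with \<open>a \<in># R\<close> have "A \<noteq> 0"
    by (auto simp: A_def)
  define U where "U = filter_mset (\<lambda>x. \<exists>c\<in>{..<n}. ?in (int c) x) R"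
  have U_sum: "U = (\<Sum>c<n. filter_mset (?in (int c)) R)"
    unfolding U_def by (rule filter_mset_residue_classes)
  then have "size U = n * A"
    by (simp add: A_const)
  moreover have "size U \<le> n"
    unfolding U_def \<open>size R = n\<close>[symmetric] by (rule size_filter_mset_lesseq)
  ultimately have "A = 1"
    using \<open>A \<noteq> 0\<close> \<open>n > 0\<close> by simp
  have "U \<subseteq># R"
    unfolding U_def by (rule multiset_filter_subset)
  with \<open>size U = n * A\<close> \<open>A = 1\<close> \<open>size R = n\<close> have "U = R"
    using mset_subset_size subset_mset.le_less by fastforce
  with U_sum have "R = (\<Sum>c<n. filter_mset (?in (int c)) R)"
    by simp
  from residue_class_representatives[OF this] show ?thesis
    using A_const \<open>A = 1\<close> by blast
qed

lemma pcompose_prod_mset: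
  "pcompose (\<Prod>x\<in>#A. g x) q = (\<Prod>x\<in>#A. pcompose (g x) (q :: 'a::comm_ring_1 poly))"
  by (induction A) (simp_all add: pcompose_mult pcompose_1)

lemma proots_prod_mset_linear:
  "proots (\<Prod>x\<in>#A. [:- f x, 1:] :: 'a::idom poly) = image_mset f A"
proof (induction A)
  case (add x A)
  have "(\<Prod>x\<in>#A. [:- f x, 1:] :: 'a poly) \<noteq> 0"
    by (auto simp: prod_mset_zero_iff)
  then have "proots ([:- f x, 1:] * (\<Prod>x\<in>#A. [:- f x, 1:])) = add_mset (f x) (image_mset f A)"
    using add.IH by (subst proots_mult) auto
  then show ?case
    by (simp only: image_mset_add_mset prod_mset.add_mset)
qed simp

lemma proots_pcompose_shift:
  fixes p :: "complex poly"
  assumes "p \<noteq> 0"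
  shows "proots (pcompose p [:c, 1:]) = image_mset (\<lambda>a. a - c) (proots p)"
proof -
  have "pcompose [:- x, 1:] [:c, 1:] = [:- (x - c), 1 :: complex:]" for x
    by (simp add: pcompose_pCons)
  then have "pcompose p [:c, 1:] = smult (lead_coeff p) (\<Prod>x\<in>#proots p. [:- (x - c), 1:])"
    using arg_cong[OF complex_poly_decompose_multiset[of p], of "\<lambda>p. pcompose p [:c, 1:]"]
    by (simp add: pcompose_smult pcompose_prod_mset)
  then show ?thesis
    using assms proots_prod_mset_linear[of "\<lambda>x. x - c" "proots p"] by simp
qed

lemma sum_mset_image_add:
  "sum_mset (image_mset (\<lambda>a. a + c) A) = sum_mset A + of_nat (size A) * (c :: 'a::comm_semiring_1)"
  by (induction A) (simp_all add: algebra_simps)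

text \<open>Summing all roots of both sides shows e = - degree Q.\<close>
lemma roots_shift_identity:
  fixes P Q :: "complex poly"
  assumes "degree P = n" and "n > 0" and "P \<noteq> 0" and "Q \<noteq> 0"
    and eq: "pcompose P [:of_int e, 1:] * Q = P * pcompose Q [:- of_nat n, 1:]"
  shows "image_mset (\<lambda>a. a + of_nat (degree Q)) (proots P) + proots Q
       = proots P + image_mset (\<lambda>a. a + of_nat n) (proots Q)"
proof -
  let ?R = "proots P" and ?T = "proots Q" and ?r = "degree Q"
  have "pcompose P [:of_int e, 1:] \<noteq> 0" and "pcompose Q [:- of_nat n, 1:] \<noteq> 0"
    using assms(3,4) by (simp_all add: pcompose_eq_0_iff)
  with arg_cong[OF eq, of proots] assms(3,4)
  have roots: "image_mset (\<lambda>a. a + of_int (- e)) ?R + ?T = ?R + image_mset (\<lambda>a. a + of_nat n) ?T"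
    by (simp add: proots_mult proots_pcompose_shift)
  have "size ?R = n" and "size ?T = ?r"
    using assms(1) by (simp_all add: size_proots_complex)
  with arg_cong[OF roots, of sum_mset] have "of_nat n * (of_int e + of_nat ?r) = (0 :: complex)"
    by (simp only: sum_mset.union sum_mset_image_add) (simp add: algebra_simps)
  with \<open>n > 0\<close> have "of_int (e + int ?r) = (0 :: complex)"
    by simp
  then have "e = - int ?r"
    by (simp only: of_int_eq_0_iff)
  with roots show ?thesis
    by simp
qed

lemma integral_if_complete_residue_roots:
  fixes a :: complex and k :: "nat \<Rightarrow> int"
  assumes "n > 0" and k: "\<forall>c<n. k c mod int n = int c"
    and sum: "(\<Sum>c<n. a + of_int (k c)) = (\<Sum>c<n. of_nat c)"
  shows "\<exists>z::int. a = of_int z"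
proof -
  define D where "D = (\<Sum>c<n. int c) - (\<Sum>c<n. k c)"
  from sum have "of_nat n * a = of_int D"
    by (simp add: D_def sum.distrib algebra_simps)
  have "(\<Sum>c<n. k c) mod int n = (\<Sum>c<n. k c mod int n) mod int n"
    by (simp add: mod_sum_eq)
  also have "(\<Sum>c<n. k c mod int n) = (\<Sum>c<n. int c)"
    using k by simp
  finally have "int n dvd D"
    unfolding D_def by (simp add: mod_eq_dvd_iff dvd_diff_commute)
  then obtain z where "D = int n * z"
    by (elim dvdE)
  with \<open>of_nat n * a = of_int D\<close> \<open>n > 0\<close> have "a = of_int z"
    by simp
  then show ?thesis ..
qed

lemma indices_if_shift_identity:
  fixes P Q :: "complex poly"
  assumes "n > 0" and "degree P = n" and "lead_coeff P = 1" and "Q \<noteq> 0"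
    and "coprime (degree Q) n"
    and "pcompose P [:of_int e, 1:] * Q = P * pcompose Q [:- of_nat n, 1:]"
    and roots_sum: "coeff P (n - 1) = - (\<Sum>i<n. of_nat i)"
  shows "\<exists>m :: nat \<Rightarrow> int. P = (\<Prod>i<n. [:- of_int (m i), 1:]) \<and>
           (\<forall>i<n. \<forall>j<n. i \<noteq> j \<longrightarrow> m i mod int n \<noteq> m j mod int n)"
proof -
  have "P \<noteq> 0"
    using assms(3) by auto
  from roots_shift_identity[OF assms(2,1) this assms(4,6)] obtain a k
    where k: "\<forall>c<n. k c mod int n = int c"
      and R: "proots P = image_mset (\<lambda>c. a + of_int (k c)) (mset_set {..<n})"
    using complete_residue_system_if_shift_identity[of n "proots P" "degree Q" "proots Q"] assms
    by (auto simp: size_proots_complex)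
  have P: "P = (\<Prod>c<n. [:- (a + of_int (k c)), 1:])"
    using complex_poly_decompose_multiset[of P] assms(3)
    by (simp add: R prod_unfold_prod_mset image_mset.compositionality comp_def)
  have "coeff P (n - 1) = - (\<Sum>c<n. a + of_int (k c))"
    using coeff_prod_linear_subleading[of "\<lambda>c. a + of_int (k c)" "n - 1"] \<open>n > 0\<close>
    by (simp add: P)
  with roots_sum obtain z where z: "a = of_int z"
    using integral_if_complete_residue_roots[OF \<open>n > 0\<close> k] by auto
  define m where "m c = z + k c" for c
  have "P = (\<Prod>i<n. [:- of_int (m i), 1:])"
    by (simp add: P m_def z)
  moreover have "m i mod int n \<noteq> m j mod int n" if "i < n" "j < n" "i \<noteq> j" for i j
  proof
    assume "m i mod int n = m j mod int n"
    then have "(z + k i mod int n) mod int n = (z + k j mod int n) mod int n"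
      unfolding m_def by (metis mod_add_right_eq)
    then have "(int i + z) mod int n = (int j + z) mod int n"
      using k that by (simp add: add.commute)
    then have "int i mod int n = int j mod int n"
      by (metis add_diff_cancel_right' mod_diff_left_eq)
    with that show False
      by simp
  qed
  ultimately show ?thesis
    by blast
qed

lemma alg_integrable_L0_imp_indices:
  assumes "n > 0" and "alg_integrable (L0 n b)"
  shows "\<exists>m :: nat \<Rightarrow> int. indicial_poly n b = (\<Prod>i<n. [:- of_int (m i), 1:]) \<and>
           (\<forall>i<n. \<forall>j<n. i \<noteq> j \<longrightarrow> m i mod int n \<noteq> m j mod int n)"
proof -
  obtain M where "dop_nonzero M" and coprime: "coprime (dop_order M) n"
    and commute: "dop_commute (L0 n b) M"
    using assms(2) unfolding alg_integrable_def dop_order_L0 by blast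
  obtain u where "dop_coeff M (dop_order M) $$ u \<noteq> 0"
    using dop_coeff_order_neq_0[OF \<open>dop_nonzero M\<close>] by (metis fls_eqI fls_zero_nth)
  note symbol = degree_dop_symbol_order[OF \<open>dop_nonzero M\<close> this]
  show ?thesis
    using indices_if_shift_identity[OF assms(1) degree_indicial_poly lead_coeff_indicial_poly symbol(2)
        _ commuting_with_L0_imp_symbol_identity[OF commute]]
      coprime coeff_indicial_poly_subleading assms(1)
    by (simp add: symbol(1))
qed

section \<open>Sufficiency of the condition\<close>

lemma ffact_poly_basis:
  fixes q :: "'a::{idom,ring_char_0} poly"
  assumes "degree q \<le> d"
  shows "\<exists>c. q = (\<Sum>j\<le>d. smult (c j) (ffact_poly j))"
  using assms
proof (induction d arbitrary: q)
  case 0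
  then show ?case
    by (intro exI[of _ "\<lambda>_. coeff q 0"]) (simp add: ffact_poly_def degree_0_id)
next
  case (Suc d)
  define q' where "q' = q - smult (coeff q (Suc d)) (ffact_poly (Suc d))"
  have "degree q' \<le> d"
  proof (rule degree_le, intro allI impI)
    fix i assume "d < i"
    then show "coeff q' i = 0"
      using Suc.prems by (cases "i = Suc d") (auto simp: q'_def coeff_eq_0)
  qed
  then obtain c where "q' = (\<Sum>j\<le>d. smult (c j) (ffact_poly j))"
    using Suc.IH by blast
  then have "q = (\<Sum>j\<le>Suc d. smult ((c(Suc d := coeff q (Suc d))) j) (ffact_poly j))"
    by (simp add: q'_def algebra_simps)
  then show ?case
    by blast
qed

lemma coeff_ffact_poly_sum_top:
  "coeff (\<Sum>j\<le>d. smult (c j) (ffact_poly j) :: 'a::{idom,ring_char_0} poly) d = c d"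
proof -
  have "(\<Sum>j\<in>{..d} - {d}. c j * coeff (ffact_poly j :: 'a poly) d) = 0"
    by (intro sum.neutral) (auto intro!: coeff_eq_0)
  then show ?thesis
    by (simp add: coeff_sum sum.remove[of _ d])
qed

definition homogeneous_dop :: "(nat \<Rightarrow> complex) \<Rightarrow> nat \<Rightarrow> dop" where
  "homogeneous_dop c d = map (\<lambda>j. fls_const (c j) * fls_X_intpow (int j - int d)) [0..<Suc d]"

lemma length_homogeneous_dop [simp]: "length (homogeneous_dop c d) = Suc d"
  by (simp add: homogeneous_dop_def)

lemma dop_coeff_homogeneous_dop:
  "j \<le> d \<Longrightarrow> dop_coeff (homogeneous_dop c d) j = fls_const (c j) * fls_X_intpow (int j - int d)"
  by (simp add: homogeneous_dop_def dop_coeff_def del: upt_Suc)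

lemma dop_apply_homogeneous_dop_X_intpow:
  "dop_apply (homogeneous_dop c d) (fls_X_intpow s)
     = fls_const (poly (\<Sum>j\<le>d. smult (c j) (ffact_poly j)) (of_int s)) * fls_X_intpow (s - int d)"
proof (rule fls_eqI)
  fix t
  have "dop_apply (homogeneous_dop c d) (fls_X_intpow s) $$ t
      = (\<Sum>j<Suc d. (if t = s - int d then c j else 0) * ffact j (of_int s))"
    by (simp add: dop_apply_coeffs_X_intpow_nth dop_coeff_homogeneous_dop)
  then show "dop_apply (homogeneous_dop c d) (fls_X_intpow s) $$ t
      = (fls_const (poly (\<Sum>j\<le>d. smult (c j) (ffact_poly j)) (of_int s)) * fls_X_intpow (s - int d)) $$ t"
    by (simp add: poly_sum lessThan_Suc_atMost)
qed

text \<open>Writing Q in the falling factorial basis gives a homogeneous operator M of order d with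
  symbol Q; applied to z^s, both L0 M and M L0 yield the same multiple of z^(s-d-n).\<close>
lemma alg_integrable_L0_if_symbol_identity:
  fixes Q :: "complex poly"
  assumes "degree Q = d" and "lead_coeff Q = 1" and "coprime d n"
    and symbol: "\<And>x. poly Q x * poly (indicial_poly n b) (x - of_nat d)
                    = poly (indicial_poly n b) x * poly Q (x - of_nat n)"
  shows "alg_integrable (L0 n b)"
proof -
  obtain c where c: "Q = (\<Sum>j\<le>d. smult (c j) (ffact_poly j))"
    using ffact_poly_basis[of Q d] assms(1) by auto
  with assms(1,2) have "c d = 1"
    using coeff_ffact_poly_sum_top[of c d] by simp
  let ?M = "homogeneous_dop c d" and ?P = "poly (indicial_poly n b)"
  have "dop_commute (L0 n b) ?M"
  proof (rule dop_commuteI_X_intpow)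
    fix s
    let ?X = "fls_X_intpow"
    have L0_M: "dop_apply (L0 n b) (dop_apply ?M (?X s))
        = fls_const (poly Q (of_int s) * ?P (of_int (s - int d))) * ?X (s - int d - int n)"
      by (simp only: dop_apply_homogeneous_dop_X_intpow c[symmetric] dop_apply_coeffs_const_mult
          dop_apply_L0_X_intpow mult.assoc[symmetric] fls_const_mult_const)
    have M_L0: "dop_apply ?M (dop_apply (L0 n b) (?X s))
        = fls_const (?P (of_int s) * poly Q (of_int (s - int n))) * ?X (s - int n - int d)"
      by (simp only: dop_apply_homogeneous_dop_X_intpow c[symmetric] dop_apply_coeffs_const_mult
          dop_apply_L0_X_intpow mult.assoc[symmetric] fls_const_mult_const)
    have "poly Q (of_int s) * ?P (of_int (s - int d)) = ?P (of_int s) * poly Q (of_int (s - int n))"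
      using symbol[of "of_int s"] by simp
    moreover have "s - int d - int n = s - int n - int d"
      by simp
    ultimately show "dop_apply (L0 n b) (dop_apply ?M (?X s)) = dop_apply ?M (dop_apply (L0 n b) (?X s))"
      unfolding L0_M M_L0 by (simp only:)
  qed
  moreover have "dop_coeff ?M d \<noteq> 0"
    using \<open>c d = 1\<close> by (simp add: dop_coeff_homogeneous_dop)
  ultimately show ?thesis
    unfolding alg_integrable_def
    using dop_order_eqI[of ?M d] assms(3) dop_order_L0[of n b]
    by (auto simp: dop_nonzero_def)
qed

lemma prod_arith_progression_shift:
  fixes x c d :: "'a::comm_ring_1"
  shows "(\<Prod>j<k. x - (c + d * of_nat j)) * (x - (c + d * of_nat k))
       = (x - c) * (\<Prod>j<k. (x - d) - (c + d * of_nat j))"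
proof -
  have "(\<Prod>j<k. x - (c + d * of_nat j)) * (x - (c + d * of_nat k))
      = (\<Prod>j<Suc k. x - (c + d * of_nat j))"
    by simp
  also have "\<dots> = (x - c) * (\<Prod>j<k. x - (c + d * of_nat (Suc j)))"
    by (subst prod.lessThan_Suc_shift) simp
  also have "(\<Prod>j<k. x - (c + d * of_nat (Suc j))) = (\<Prod>j<k. (x - d) - (c + d * of_nat j))"
    by (intro prod.cong refl) (simp add: algebra_simps)
  finally show ?thesis .
qed

lemma residue_successor_permutation:
  fixes m :: "nat \<Rightarrow> int"
  assumes "n > 0" and distinct: "\<forall>i<n. \<forall>j<n. i \<noteq> j \<longrightarrow> m i mod int n \<noteq> m j mod int n"
  shows "\<exists>\<sigma>. bij_betw \<sigma> {..<n} {..<n} \<and> (\<forall>i<n. m (\<sigma> i) mod int n = (m i + 1) mod int n)"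
proof -
  let ?res = "\<lambda>i. m i mod int n"
  have "inj_on ?res {..<n}"
    using distinct unfolding inj_on_def by auto
  moreover have "?res ` {..<n} \<subseteq> {0..<int n}"
    using \<open>n > 0\<close> by auto
  ultimately have image: "?res ` {..<n} = {0..<int n}"
    by (intro card_subset_eq) (auto simp: card_image)
  have "\<forall>i. \<exists>j. i < n \<longrightarrow> j < n \<and> ?res j = (m i + 1) mod int n"
  proof
    fix i
    have "(m i + 1) mod int n \<in> ?res ` {..<n}"
      unfolding image using \<open>n > 0\<close> by simp
    then obtain j where "j \<in> {..<n}" "(m i + 1) mod int n = ?res j"
      by (rule imageE)
    then show "\<exists>j. i < n \<longrightarrow> j < n \<and> ?res j = (m i + 1) mod int n"
      by auto
  qed
  from choice[OF this] obtain \<sigma>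
    where \<sigma>: "i < n \<Longrightarrow> \<sigma> i < n \<and> ?res (\<sigma> i) = (m i + 1) mod int n" for i
    by blast
  have "inj_on \<sigma> {..<n}"
  proof (rule inj_onI)
    fix i i' assume "i \<in> {..<n}" "i' \<in> {..<n}" "\<sigma> i = \<sigma> i'"
    then have "(m i + 1) mod int n = (m i' + 1) mod int n"
      using \<sigma> by (metis lessThan_iff)
    then have "m i mod int n = m i' mod int n"
      by (metis add_diff_cancel_right' mod_diff_left_eq)
    with distinct \<open>i \<in> {..<n}\<close> \<open>i' \<in> {..<n}\<close> show "i = i'"
      by auto
  qed
  moreover have "\<sigma> ` {..<n} = {..<n}"
    using \<sigma> \<open>inj_on \<sigma> {..<n}\<close> by (intro endo_inj_surj) auto
  ultimately show ?thesis
    using \<sigma> unfolding bij_betw_def by blast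
qed

lemma exists_coprime_shift:
  fixes m :: "nat \<Rightarrow> int"
  assumes "n > 0" and \<sigma>_less: "\<And>i. i < n \<Longrightarrow> \<sigma> i < n"
    and \<sigma>: "\<And>i. i < n \<Longrightarrow> m (\<sigma> i) mod int n = (m i + 1) mod int n"
  shows "\<exists>R k. coprime R n \<and> (\<forall>i<n. m i + int R - m (\<sigma> i) = int n * int (k i))"
proof -
  define S where "S = (\<Sum>i<n. \<bar>m i\<bar>)"
  have S: "\<bar>m i\<bar> \<le> S" if "i < n" for i
    unfolding S_def using that by (intro member_le_sum) auto
  have "S \<ge> 0"
    unfolding S_def by (intro sum_nonneg) auto
  define R where "R = 1 + n * nat (2 * S)"
  have R_int: "int R = 1 + int n * (2 * S)"
    using \<open>S \<ge> 0\<close> by (simp add: R_def)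
  have "1 * (2 * S) \<le> int n * (2 * S)"
    using \<open>n > 0\<close> \<open>S \<ge> 0\<close> by (intro mult_right_mono) auto
  then have R_large: "int R \<ge> 1 + 2 * S"
    using R_int by simp
  have "\<exists>k. m i + int R - m (\<sigma> i) = int n * int k" if "i < n" for i
  proof -
    have "m i + int R = (m i + 1) + 2 * S * int n"
      unfolding R_int by (simp add: algebra_simps)
    then have "(m i + int R) mod int n = m (\<sigma> i) mod int n"
      using \<sigma>[OF that] by (simp only: mod_mult_self1)
    then have "int n dvd m i + int R - m (\<sigma> i)"
      by (simp only: mod_eq_dvd_iff)
    then obtain q where q: "m i + int R - m (\<sigma> i) = int n * q"
      by (elim dvdE)
    from R_large S[OF that] S[OF \<sigma>_less[OF that]] have "int n * q > 0"
      unfolding q[symmetric] by linarith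
    with \<open>n > 0\<close> q show ?thesis
      by (intro exI[of _ "nat q"]) (simp add: zero_less_mult_iff)
  qed
  then have "\<forall>i. \<exists>k. i < n \<longrightarrow> m i + int R - m (\<sigma> i) = int n * int k"
    by blast
  moreover have "coprime R n"
    unfolding R_def by (metis coprime_Suc_left_nat coprime_mult_right_iff plus_1_eq_Suc)
  ultimately show ?thesis
    by (metis choice)
qed

text \<open>The roots m_(sigma i) + n j for j < k_i fill the gap between m_(sigma i) and
  m_i + R = m_(sigma i) + n k_i, so the products telescope.\<close>
lemma progression_product_identity:
  fixes m :: "nat \<Rightarrow> int" and x :: complex
  assumes bij: "bij_betw \<sigma> {..<n} {..<n}"
    and k: "\<And>i. i < n \<Longrightarrow> m i + int R - m (\<sigma> i) = int n * int (k i)"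
  defines "Q \<equiv> (\<Prod>i<n. \<Prod>j<k i. [:- (of_int (m (\<sigma> i)) + of_nat n * of_nat j), 1:])"
  shows "poly Q x * (\<Prod>i<n. x - of_nat R - of_int (m i))
       = (\<Prod>i<n. x - of_int (m i)) * poly Q (x - of_nat n)"
proof -
  let ?A = "\<lambda>i y. \<Prod>j<k i. y - (of_int (m (\<sigma> i)) + of_nat n * of_nat j)"
  have Q_eq: "poly Q y = (\<Prod>i<n. ?A i y)" for y
    by (simp add: Q_def poly_prod algebra_simps)
  have shifted: "x - of_nat R - of_int (m i) = x - (of_int (m (\<sigma> i)) + of_nat n * of_nat (k i))"
    if "i < n" for i
    using arg_cong[OF k[OF that], of "of_int :: int \<Rightarrow> complex"] by (simp add: algebra_simps)
  have "poly Q x * (\<Prod>i<n. x - of_nat R - of_int (m i)) = (\<Prod>i<n. ?A i x * (x - of_nat R - of_int (m i)))"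
    by (simp only: Q_eq prod.distrib)
  also have "\<dots> = (\<Prod>i<n. ?A i x * (x - (of_int (m (\<sigma> i)) + of_nat n * of_nat (k i))))"
    by (rule prod.cong) (simp_all add: shifted)
  also have "\<dots> = (\<Prod>i<n. (x - of_int (m (\<sigma> i))) * ?A i (x - of_nat n))"
    by (simp only: prod_arith_progression_shift)
  also have "\<dots> = (\<Prod>i<n. x - of_int (m i)) * poly Q (x - of_nat n)"
    by (simp add: Q_eq prod.distrib prod.reindex_bij_betw[OF bij, of "\<lambda>i. x - of_int (m i)"])
  finally show ?thesis .
qed

lemma indices_imp_alg_integrable_L0:
  fixes m :: "nat \<Rightarrow> int"
  assumes "n > 0" and P: "indicial_poly n b = (\<Prod>i<n. [:- of_int (m i), 1:])"
    and distinct: "\<forall>i<n. \<forall>j<n. i \<noteq> j \<longrightarrow> m i mod int n \<noteq> m j mod int n"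
  shows "alg_integrable (L0 n b)"
proof -
  obtain \<sigma> where bij: "bij_betw \<sigma> {..<n} {..<n}"
    and \<sigma>: "\<forall>i<n. m (\<sigma> i) mod int n = (m i + 1) mod int n"
    using residue_successor_permutation[OF assms(1) distinct] by blast
  have "\<sigma> i < n" if "i < n" for i
    using bij that by (auto simp: bij_betw_def)
  then obtain R k where "coprime R n" and k: "\<forall>i<n. m i + int R - m (\<sigma> i) = int n * int (k i)"
    using exists_coprime_shift[OF \<open>n > 0\<close>, of \<sigma> m] \<sigma> by blast
  define Q where "Q = (\<Prod>i<n. \<Prod>j<k i. [:- (of_int (m (\<sigma> i)) + of_nat n * of_nat j), 1:] :: complex poly)"
  have "int n * int (\<Sum>i<n. k i) = (\<Sum>i<n. m i + int R - m (\<sigma> i))"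
    by (simp add: sum_distrib_left k)
  also have "\<dots> = int n * int R"
    by (simp add: sum_subtractf sum.distrib sum.reindex_bij_betw[OF bij])
  finally have "degree Q = R"
    using \<open>n > 0\<close> by (simp add: Q_def degree_prod_sum_eq flip: of_nat_sum)
  moreover have "lead_coeff Q = 1"
    by (simp add: Q_def lead_coeff_prod)
  moreover have "poly Q x * poly (indicial_poly n b) (x - of_nat R)
      = poly (indicial_poly n b) x * poly Q (x - of_nat n)" for x
    using progression_product_identity[OF bij, of m R k x] k
    by (simp add: Q_def P poly_prod mult.commute[of "poly _ (x - of_nat n)"])
  ultimately show ?thesis
    using alg_integrable_L0_if_symbol_identity \<open>coprime R n\<close> by blast
qed

theorem proposition2p3:
  fixes n :: nat and b :: "nat \<Rightarrow> complex"
  assumes "n \<ge> 2"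
  shows "alg_integrable (L0 n b) \<longleftrightarrow>
    (\<exists>m :: nat \<Rightarrow> int.
        indicial_poly n b = (\<Prod>i<n. [:- of_int (m i), 1:]) \<and>
        (\<forall>i<n. \<forall>j<n. i \<noteq> j \<longrightarrow> m i mod int n \<noteq> m j mod int n))"
proof -
  have "n > 0"
    using assms by simp
  then show ?thesis
    using alg_integrable_L0_imp_indices[of n b] indices_imp_alg_integrable_L0[of n b _] by metis
qed

end
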